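(* Consider the asymmetric case with fixed $q<p$, and let $\alpha\in(0,1)$. The Galton–Watson process with one immigrant per generation and offspring law $D$ (transition $w\mapsto\sum_{i=0}^{w}\xi_i$, with $\xi_i$ i.i.d. $\sim D$) is positive recurrent. Its unique stationary distribution $\pi$ has probability generating function $\Psi(s)=\sum_{k\ge0}\pi(k)s^k$ satisfying $$\Psi(s)=\Psi(\phi(s))\,\phi(s),\qquad \phi(s)=E[s^D]=\frac{p}{1-qs}.$$ Moreover, for every fixed $M\ge1$, as $N\to\infty$: (i) $\eta_{[(1-\alpha)N]}$ converges in distribution to $\pi$, and the reversed segment $\big(\eta_{[(1-\alpha)N]-k}\big)_{k=0}^M$ converges in distribution to $(W_{-k})_{k=0}^M$, where $(W_j)_{j\in\mathbb Z}$ is the stationary version of the immigration chain above, with marginal law $\pi$; (ii) the forward segment $\big(\eta_{[(1-\alpha)N]+k}\big)_{k=0}^M$ converges in distribution to the first $M+1$ generations of a Galton–Watson process (without immigration) with offspring law $D$ and initial law $\pi$.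
   Context: Fix $0<q<p$ with $p+q=1$, and $N\ge2$. Let $D$ be a random variable with $P(D=n)=pq^n$ for $n\ge0$, so that $E[D]=q/p<1$. Fix $\alpha\in(0,1)$. Empty sums are $0$, and $[\cdot]$ is the integer part. Let $\{\xi_{j,i}\}_{i,j\ge0}$ be i.i.d. copies of $D$. Define $(\eta_j)_{0\le j\le N}$ by $\eta_0=0$ and - $\eta_{j+1}=\sum_{i=0}^{\eta_j}\xi_{j,i}$ for $0\le j<[(1-\alpha)N]$, - $\eta_{j+1}=\sum_{i=1}^{\eta_j}\xi_{j,i}$ for $[(1-\alpha)N]\le j\le N-1$. (This chain records the numbers of left-crossings of bonds, counted from the right endpoint, by the asymmetric walk on $\{0,\dots,N\}$ started at $[\alpha N]$.) *)

theory Defs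
  imports "HOL-Probability.Probability"
begin

text \<open>Law of the sum of k i.i.d. copies of D, where P(D = n) = p (1-p)^n
  (i.e. D ~ geometric_pmf p, with q = 1 - p).\<close>
fun iid_sum :: "real \<Rightarrow> nat \<Rightarrow> nat pmf" where
  "iid_sum p 0 = return_pmf 0"
| "iid_sum p (Suc k) = bind_pmf (geometric_pmf p) (\<lambda>x. map_pmf ((+) x) (iid_sum p k))"

definition imm_kernel :: "real \<Rightarrow> nat \<Rightarrow> nat pmf" where
  "imm_kernel p w = iid_sum p (Suc w)"

definition gw_kernel :: "real \<Rightarrow> nat \<Rightarrow> nat pmf" where
  "gw_kernel p w = iid_sum p w"

text \<open>Law of the path (X_0, ..., X_n) of a (possibly time-inhomogeneous) Markov chain
  with initial law init and transition kernel K j used for the step j -> j+1.\<close>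
fun chain_path :: "'a pmf \<Rightarrow> (nat \<Rightarrow> 'a \<Rightarrow> 'a pmf) \<Rightarrow> nat \<Rightarrow> 'a list pmf" where
  "chain_path init K 0 = map_pmf (\<lambda>x. [x]) init"
| "chain_path init K (Suc n) =
     bind_pmf (chain_path init K n) (\<lambda>xs. map_pmf (\<lambda>y. xs @ [y]) (K n (last xs)))"

text \<open>Law of (eta_0, ..., eta_n) for the chain of the paper (parameters p, alpha, N).
  Steps j < [(1-alpha)N] use the immigration kernel, later steps the GW kernel.\<close>
definition eta_path :: "real \<Rightarrow> real \<Rightarrow> nat \<Rightarrow> nat \<Rightarrow> nat list pmf" where
  "eta_path p \<alpha> N n = chain_path (return_pmf 0)
     (\<lambda>j. if j < nat \<lfloor>(1 - \<alpha>) * real N\<rfloor> then imm_kernel p else gw_kernel p) n"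

text \<open>avoid K x n w = P_w(X_1 \<noteq> x, ..., X_n \<noteq> x) for the homogeneous chain with kernel K.\<close>
fun avoid :: "('a \<Rightarrow> 'a pmf) \<Rightarrow> 'a \<Rightarrow> nat \<Rightarrow> 'a \<Rightarrow> real" where
  "avoid K x 0 w = 1"
| "avoid K x (Suc n) w = measure_pmf.expectation (K w) (\<lambda>y. if y = x then 0 else avoid K x n y)"

text \<open>Positive recurrence: every state has finite expected return time,
  E_x[T_x] = sum_{n \<ge> 0} P_x(T_x > n) < \<infinity>.\<close>
definition positive_recurrent :: "('a \<Rightarrow> 'a pmf) \<Rightarrow> bool" where
  "positive_recurrent K \<longleftrightarrow> (\<forall>x. summable (\<lambda>n. avoid K x n x))"

definition stationary :: "('a \<Rightarrow> 'a pmf) \<Rightarrow> 'a pmf \<Rightarrow> bool" where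
  "stationary K \<pi> \<longleftrightarrow> bind_pmf \<pi> K = \<pi>"

definition pgf :: "nat pmf \<Rightarrow> real \<Rightarrow> real" where
  "pgf \<mu> s = (\<Sum>k. pmf \<mu> k * s ^ k)"

text \<open>Convergence in distribution on a discrete (countable) space:
  E f(X_N) \<rightarrow> E f(X) for every bounded (hence continuous) f.\<close>
definition conv_distr :: "(nat \<Rightarrow> 'a pmf) \<Rightarrow> 'a pmf \<Rightarrow> bool" where
  "conv_distr X Y \<longleftrightarrow> (\<forall>f :: 'a \<Rightarrow> real. bounded (range f) \<longrightarrow>
     (\<lambda>N. measure_pmf.expectation (X N) f) \<longlonglongrightarrow> measure_pmf.expectation Y f)"

end

theory Submission
  imports Defs
begin

(* Write m = q/p < 1 for the mean of the offspring law D ~ Geom(p).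
   Branching property: the immigration chain started from x + z is the chain
   started from x plus an independent Galton-Watson process started from z, and the
   latter survives n generations with probability at most m^n z.  This couples any
   two starting points at geometric speed, so for a stationary law pi with finite
   mean the n-step laws from every state converge to pi; in particular pi is the
   only stationary law.  The geometric law with parameter (2p-1)/p is stationary
   (a negative binomial series), has full support, which gives positive recurrence
   by Kac's telescoping identity, and its explicit pgf satisfies the functional
   equation.  Finally, up to time t = [(1-alpha)N] the chain eta is the homogeneous
   immigration chain from 0; by the Markov property the windows before and after t
   are chains started from the (t-M)- resp. t-step law, which converges to pi. *)

lemma integrable_pmf_bounded:
  fixes f :: "'a \<Rightarrow> real"
  assumes "\<And>x. \<bar>f x\<bar> \<le> B"
  shows "integrable (measure_pmf M) f"
  by (rule measure_pmf.integrable_const_bound[where B=B]) (use assms in auto)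

lemma expectation_bind_pmf:
  fixes h :: "'b \<Rightarrow> real"
  assumes "\<And>x. \<bar>h x\<bar> \<le> B"
  shows "measure_pmf.expectation (bind_pmf M N) h
       = measure_pmf.expectation M (\<lambda>x. measure_pmf.expectation (N x) h)"
  unfolding measure_pmf_bind
  by (rule integral_bind[where K="count_space UNIV" and B=B and B'=1])
     (use assms in \<open>auto simp: measure_pmf.emeasure_space_1 measure_pmf_in_subprob_algebra
                         intro!: measure_pmf.finite_measure\<close>)

lemma abs_expectation_le:
  fixes f :: "'a \<Rightarrow> real"
  assumes "\<And>x. \<bar>f x\<bar> \<le> B"
  shows "\<bar>measure_pmf.expectation M f\<bar> \<le> B"
proof -
  have "\<bar>measure_pmf.expectation M f\<bar> \<le> measure_pmf.expectation M (\<lambda>x. \<bar>f x\<bar>)"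
    by (rule integral_abs_bound)
  also have "\<dots> \<le> B"
    by (rule measure_pmf.integral_le_const)
       (use assms integrable_pmf_bounded[of "\<lambda>x. \<bar>f x\<bar>" B] in auto)
  finally show ?thesis .
qed

lemma expectation_sums:
  fixes g :: "nat \<Rightarrow> real"
  assumes "summable (\<lambda>n. norm (pmf M n * g n))"
  shows "(\<lambda>n. pmf M n * g n) sums measure_pmf.expectation M g"
proof -
  have "measure_pmf.expectation M g = (\<integral>n. pmf M n * g n \<partial>count_space UNIV)"
    unfolding measure_pmf_eq_density by (subst integral_density) auto
  moreover have "integrable (count_space UNIV) (\<lambda>n. pmf M n * g n)"
    using assms unfolding integrable_count_space_nat_iff by simp
  ultimately show ?thesis
    by (simp add: integral_count_space_nat summable_norm_cancel[OF assms] summable_sums)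
qed

lemma bounded_range_obtain_bound:
  fixes f :: "'a \<Rightarrow> real"
  assumes "bounded (range f)"
  obtains B where "\<And>x. \<bar>f x\<bar> \<le> B"
proof -
  from assms obtain a where "\<forall>x\<in>range f. norm x \<le> a"
    unfolding Elementary_Metric_Spaces.bounded_iff by blast
  then show thesis using that[of a] by auto
qed

lemma bounded_range_of_bound:
  fixes f :: "'a \<Rightarrow> real"
  assumes "\<And>x. \<bar>f x\<bar> \<le> B"
  shows "bounded (range f)"
  unfolding Elementary_Metric_Spaces.bounded_iff using assms by auto

section \<open>Convergence in distribution\<close>

lemma conv_distr_boundedI:
  assumes "\<And>(f :: 'a \<Rightarrow> real) B. (\<And>x. \<bar>f x\<bar> \<le> B) \<Longrightarrow>
     (\<lambda>N. measure_pmf.expectation (X N) f) \<longlonglongrightarrow> measure_pmf.expectation Y f"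
  shows "conv_distr X Y"
  unfolding conv_distr_def
proof (intro allI impI)
  fix f :: "'a \<Rightarrow> real" assume "bounded (range f)"
  then obtain B where "\<And>x. \<bar>f x\<bar> \<le> B" using bounded_range_obtain_bound by blast
  then show "(\<lambda>N. measure_pmf.expectation (X N) f) \<longlonglongrightarrow> measure_pmf.expectation Y f"
    by (rule assms)
qed

lemma conv_distrD:
  fixes f :: "'a \<Rightarrow> real"
  assumes "conv_distr X Y" "\<And>x. \<bar>f x\<bar> \<le> B"
  shows "(\<lambda>N. measure_pmf.expectation (X N) f) \<longlonglongrightarrow> measure_pmf.expectation Y f"
proof -
  have "bounded (range f)" by (rule bounded_range_of_bound) (rule assms(2))
  with assms(1) show ?thesis unfolding conv_distr_def by blast
qed

text \<open>Continuous mapping theorem (every map is continuous on a discrete space).\<close>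
lemma conv_distr_map:
  assumes "conv_distr X Y"
  shows "conv_distr (\<lambda>N. map_pmf g (X N)) (map_pmf g Y)"
proof (rule conv_distr_boundedI)
  fix f :: "'b \<Rightarrow> real" and B assume "\<And>x. \<bar>f x\<bar> \<le> B"
  then show "(\<lambda>N. measure_pmf.expectation (map_pmf g (X N)) f)
               \<longlonglongrightarrow> measure_pmf.expectation (map_pmf g Y) f"
    using conv_distrD[OF assms, of "\<lambda>x. f (g x)" B] by simp
qed

lemma conv_distr_bind:
  assumes "conv_distr X Y"
  shows "conv_distr (\<lambda>N. bind_pmf (X N) h) (bind_pmf Y h)"
proof (rule conv_distr_boundedI)
  fix f :: "'b \<Rightarrow> real" and B assume B: "\<And>x. \<bar>f x\<bar> \<le> B"
  have "(\<lambda>N. measure_pmf.expectation (X N) (\<lambda>x. measure_pmf.expectation (h x) f))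
          \<longlonglongrightarrow> measure_pmf.expectation Y (\<lambda>x. measure_pmf.expectation (h x) f)"
    by (rule conv_distrD[OF assms abs_expectation_le[OF B]])
  then show "(\<lambda>N. measure_pmf.expectation (bind_pmf (X N) h) f)
               \<longlonglongrightarrow> measure_pmf.expectation (bind_pmf Y h) f"
    by (simp add: expectation_bind_pmf[OF B])
qed

lemma conv_distr_eventually_eq:
  assumes "conv_distr X Y" "eventually (\<lambda>N. X N = X' N) sequentially"
  shows "conv_distr X' Y"
proof (rule conv_distr_boundedI)
  fix f :: "'a \<Rightarrow> real" and B assume "\<And>x. \<bar>f x\<bar> \<le> B"
  from conv_distrD[OF assms(1) this]
  show "(\<lambda>N. measure_pmf.expectation (X' N) f) \<longlonglongrightarrow> measure_pmf.expectation Y f"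
    by (rule Lim_transform_eventually) (use assms(2) in \<open>auto elim: eventually_mono\<close>)
qed

lemma conv_distr_reindex:
  assumes "conv_distr X Y" "filterlim g sequentially sequentially"
  shows "conv_distr (\<lambda>N. X (g N)) Y"
  unfolding conv_distr_def
proof (intro allI impI)
  fix f :: "'a \<Rightarrow> real" assume "bounded (range f)"
  with assms(1) have "(\<lambda>N. measure_pmf.expectation (X N) f) \<longlonglongrightarrow> measure_pmf.expectation Y f"
    unfolding conv_distr_def by blast
  from filterlim_compose[OF this assms(2)]
  show "(\<lambda>N. measure_pmf.expectation (X (g N)) f) \<longlonglongrightarrow> measure_pmf.expectation Y f" .
qed

lemma iid_sum_neg_binomial: "iid_sum p k = neg_binomial_pmf k p"
  by (induction k)
     (simp_all add: neg_binomial_pmf_Suc pair_pmf_def map_pmf_def bind_assoc_pmf bind_return_pmf)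

lemma iid_sum_add:
  "iid_sum p (a + b) = bind_pmf (iid_sum p a) (\<lambda>u. map_pmf ((+) u) (iid_sum p b))"
proof (induction a)
  case 0
  have "(+) (0::nat) = id" by auto
  then show ?case by (simp add: bind_return_pmf)
next
  case (Suc a)
  then show ?case by (simp add: map_pmf_def bind_assoc_pmf bind_return_pmf add.assoc)
qed

lemma pmf_imm_kernel:
  assumes "0 < p" "p \<le> 1"
  shows "pmf (imm_kernel p w) n = real ((n + w) choose n) * p ^ Suc w * (1 - p) ^ n"
  using pmf_neg_binomial[of p "Suc w" n] assms by (simp add: imm_kernel_def iid_sum_neg_binomial)

lemma expectation_gw_kernel:
  assumes "0 < p" "p \<le> 1"
  shows "measure_pmf.expectation (gw_kernel p w) real = real w * (1 - p) / p"
    and "integrable (measure_pmf (gw_kernel p w)) real"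
  using expectation_neg_binomial_pmf[of p w] integrable_neg_binomial_pmf_real[of p w] assms
  by (auto simp: gw_kernel_def iid_sum_neg_binomial)

primrec kernel_pow :: "('a \<Rightarrow> 'a pmf) \<Rightarrow> nat \<Rightarrow> 'a \<Rightarrow> 'a pmf" where
  "kernel_pow K 0 x = return_pmf x"
| "kernel_pow K (Suc n) x = bind_pmf (K x) (kernel_pow K n)"

text \<open>Point-free forms of the defining equations, for rewriting under binds.\<close>
lemma kernel_pow_fun:
  "kernel_pow K 0 = return_pmf"
  "kernel_pow K (Suc n) = (\<lambda>x. bind_pmf (K x) (kernel_pow K n))"
  by (simp_all add: fun_eq_iff)

lemma kernel_pow_Suc_right: "kernel_pow K (Suc n) x = bind_pmf (kernel_pow K n x) K"
proof (induction n arbitrary: x)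
  case 0
  then show ?case by (simp add: kernel_pow_fun bind_return_pmf bind_return_pmf')
next
  case (Suc n)
  have step: "kernel_pow K (Suc n) = (\<lambda>y. bind_pmf (kernel_pow K n y) K)"
    using Suc.IH by (simp add: fun_eq_iff del: kernel_pow.simps)
  have "kernel_pow K (Suc (Suc n)) x = bind_pmf (K x) (\<lambda>y. bind_pmf (kernel_pow K n y) K)"
    by (simp only: kernel_pow.simps(2) step)
  also have "\<dots> = bind_pmf (kernel_pow K (Suc n) x) K" by (simp add: bind_assoc_pmf)
  finally show ?case .
qed

lemma kernel_pow_stationary:
  assumes "stationary K \<pi>"
  shows "bind_pmf \<pi> (kernel_pow K n) = \<pi>"
proof (induction n)
  case 0
  then show ?case by (simp add: bind_return_pmf')
next
  case (Suc n)
  have "bind_pmf \<pi> (kernel_pow K (Suc n)) = bind_pmf (bind_pmf \<pi> K) (kernel_pow K n)"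
    by (simp add: kernel_pow_fun bind_assoc_pmf)
  also have "\<dots> = \<pi>" using Suc assms by (simp add: stationary_def)
  finally show ?case .
qed

lemma expectation_stationary_kernel_pow:
  fixes f :: "'a \<Rightarrow> real"
  assumes "stationary K \<pi>" "\<And>x. \<bar>f x\<bar> \<le> B"
  shows "measure_pmf.expectation \<pi> f
       = measure_pmf.expectation \<pi> (\<lambda>w. measure_pmf.expectation (kernel_pow K n w) f)"
  using expectation_bind_pmf[OF assms(2), of \<pi> "kernel_pow K n"] kernel_pow_stationary[OF assms(1)]
  by simp

lemma stationary_unique_of_convergence:
  assumes conv: "\<And>w. conv_distr (\<lambda>n. kernel_pow K n w) \<pi>" and st: "stationary K \<pi>'"
  shows "\<pi>' = \<pi>"
proof (rule pmf_eqI)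
  fix k
  let ?E = "measure_pmf.expectation"
  define f :: "'a \<Rightarrow> real" where "f = indicator {k}"
  have f: "\<bar>f x\<bar> \<le> 1" for x by (simp add: f_def indicator_def)
  have "(\<lambda>n. ?E \<pi>' (\<lambda>w. ?E (kernel_pow K n w) f)) \<longlonglongrightarrow> ?E \<pi>' (\<lambda>w. ?E \<pi> f)"
  proof (rule integral_dominated_convergence[where w="\<lambda>_. 1"])
    show "AE w in measure_pmf \<pi>'. (\<lambda>n. ?E (kernel_pow K n w) f) \<longlonglongrightarrow> ?E \<pi> f"
      using conv_distrD[OF conv f] by simp
    show "AE w in measure_pmf \<pi>'. norm (?E (kernel_pow K n w) f) \<le> 1" for n
      using abs_expectation_le[of f 1, OF f] by simp
  qed auto
  moreover have "?E \<pi>' (\<lambda>w. ?E (kernel_pow K n w) f) = ?E \<pi>' f" for n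
    by (rule expectation_stationary_kernel_pow[where f=f and B=1, OF st f, symmetric])
  ultimately have "(\<lambda>n. ?E \<pi>' f) \<longlonglongrightarrow> ?E \<pi> f" by (simp add: measure_pmf.prob_space)
  then have "?E \<pi>' f = ?E \<pi> f" by (rule LIMSEQ_const_iff[THEN iffD1])
  then show "pmf \<pi>' k = pmf \<pi> k" by (simp add: f_def measure_pmf_single)
qed

section \<open>Coupling of the immigration chain\<close>

text \<open>Branching property: z extra individuals evolve as an independent Galton-Watson process.\<close>
lemma kernel_pow_imm_add:
  "kernel_pow (imm_kernel p) n (x + z)
     = bind_pmf (kernel_pow (imm_kernel p) n x) (\<lambda>a. map_pmf ((+) a) (kernel_pow (gw_kernel p) n z))"
proof (induction n arbitrary: x z)
  case 0
  then show ?case by (simp add: bind_return_pmf)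
next
  case (Suc n)
  let ?K = "imm_kernel p" and ?G = "gw_kernel p"
  have split: "?K (x + z) = bind_pmf (?K x) (\<lambda>u. map_pmf ((+) u) (?G z))"
    unfolding imm_kernel_def gw_kernel_def using iid_sum_add[of p "Suc x" z] by simp
  have "kernel_pow ?K (Suc n) (x + z)
      = bind_pmf (?K x) (\<lambda>u. bind_pmf (?G z) (\<lambda>v. kernel_pow ?K n (u + v)))"
    by (simp add: split bind_assoc_pmf bind_map_pmf)
  also have "\<dots> = bind_pmf (?K x) (\<lambda>u. bind_pmf (?G z) (\<lambda>v.
                    bind_pmf (kernel_pow ?K n u) (\<lambda>a. map_pmf ((+) a) (kernel_pow ?G n v))))"
    using Suc.IH by simp
  also have "\<dots> = bind_pmf (?K x) (\<lambda>u. bind_pmf (kernel_pow ?K n u) (\<lambda>a.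
                    bind_pmf (?G z) (\<lambda>v. map_pmf ((+) a) (kernel_pow ?G n v))))"
    by (rule bind_pmf_cong[OF refl]) (rule bind_commute_pmf)
  also have "\<dots> = bind_pmf (kernel_pow ?K (Suc n) x)
                    (\<lambda>a. map_pmf ((+) a) (kernel_pow ?G (Suc n) z))"
    by (simp add: bind_assoc_pmf map_bind_pmf)
  finally show ?case .
qed

text \<open>First-moment bound on survival of the Galton-Watson process with mean (1-p)/p.\<close>
lemma gw_survival_bound:
  assumes "0 < p" "p \<le> 1"
  shows "1 - pmf (kernel_pow (gw_kernel p) n z) 0 \<le> ((1 - p) / p) ^ n * real z"
proof (induction n arbitrary: z)
  case 0
  then show ?case by (cases z) (auto simp: indicator_def)
next
  case (Suc n)
  let ?G = "gw_kernel p" and ?m = "(1 - p) / p"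
  note mean = expectation_gw_kernel[OF assms, of z]
  have "1 - ?m ^ Suc n * real z = measure_pmf.expectation (?G z) (\<lambda>w. 1 - ?m ^ n * real w)"
    using mean by (simp add: integral_diff measure_pmf.prob_space algebra_simps)
  also have "\<dots> \<le> measure_pmf.expectation (?G z) (\<lambda>w. pmf (kernel_pow ?G n w) 0)"
    by (rule integral_mono)
       (use mean Suc.IH in \<open>auto intro: integrable_pmf_bounded[where B=1] simp: pmf_le_1 algebra_simps\<close>)
  also have "\<dots> = pmf (kernel_pow ?G (Suc n) z) 0" by (simp add: pmf_bind)
  finally show ?case by linarith
qed

lemma expectation_shift_bound:
  fixes f :: "nat \<Rightarrow> real" and Z :: "nat pmf"
  assumes f: "\<And>x. \<bar>f x\<bar> \<le> B"
  shows "\<bar>measure_pmf.expectation Z (\<lambda>b. f (a + b)) - f a\<bar> \<le> 2 * B * (1 - pmf Z 0)"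
proof -
  let ?E = "measure_pmf.expectation Z"
  have B: "0 \<le> B" using f[of 0] by auto
  have "?E (\<lambda>b. f (a + b)) - f a = ?E (\<lambda>b. f (a + b) - f a)"
    by (subst Bochner_Integration.integral_diff)
       (auto intro: integrable_pmf_bounded f simp: measure_pmf.prob_space)
  also have "\<bar>\<dots>\<bar> \<le> ?E (\<lambda>b. 2 * B * indicator (UNIV - {0}) b)"
  proof (rule order.trans[OF integral_abs_bound integral_mono])
    show "integrable (measure_pmf Z) (\<lambda>b. \<bar>f (a + b) - f a\<bar>)"
      by (rule integrable_pmf_bounded[where B="2 * B"]) (use f in \<open>simp add: abs_le_iff; smt\<close>)
    show "integrable (measure_pmf Z) (\<lambda>b. 2 * B * indicator (UNIV - {0}) b)"
      by (rule integrable_pmf_bounded[where B="2 * B"]) (use B in \<open>auto simp: indicator_def\<close>)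
    show "\<bar>f (a + b) - f a\<bar> \<le> 2 * B * indicator (UNIV - {0}) b" for b
      using f[of "a + b"] f[of a] by (cases "b = 0") (auto simp: indicator_def)
  qed
  also have "\<dots> = 2 * B * (1 - pmf Z 0)"
    using measure_pmf.prob_compl[of "{0}" Z] by (simp add: measure_pmf_single)
  finally show ?thesis .
qed

lemma imm_coupling_bound:
  fixes f :: "nat \<Rightarrow> real"
  assumes p: "0 < p" "p \<le> 1" and f: "\<And>x. \<bar>f x\<bar> \<le> B"
  shows "\<bar>measure_pmf.expectation (kernel_pow (imm_kernel p) n (x + z)) f
          - measure_pmf.expectation (kernel_pow (imm_kernel p) n x) f\<bar>
         \<le> 2 * B * ((1 - p) / p) ^ n * real z"
proof -
  let ?E = "measure_pmf.expectation"
  let ?A = "kernel_pow (imm_kernel p) n x" and ?Z = "kernel_pow (gw_kernel p) n z"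
  have B: "0 \<le> B" using f[of 0] by auto
  have "?E (kernel_pow (imm_kernel p) n (x + z)) f - ?E ?A f
      = ?E ?A (\<lambda>a. ?E ?Z (\<lambda>b. f (a + b)) - f a)"
    by (simp add: kernel_pow_imm_add expectation_bind_pmf[OF f] Bochner_Integration.integral_diff
                  integrable_pmf_bounded[OF abs_expectation_le[OF f]] integrable_pmf_bounded[OF f])
  also have "\<bar>\<dots>\<bar> \<le> 2 * B * (1 - pmf ?Z 0)"
    by (rule abs_expectation_le) (rule expectation_shift_bound[OF f])
  also have "\<dots> \<le> 2 * B * (((1 - p) / p) ^ n * real z)"
    using gw_survival_bound[OF p, of n z] B by (intro mult_left_mono) auto
  finally show ?thesis by (simp add: mult.assoc)
qed

lemma imm_kernel_convergence:
  assumes p: "0 < p" "p \<le> 1" and m: "(1 - p) / p < 1"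
    and st: "stationary (imm_kernel p) \<pi>" and mean: "integrable (measure_pmf \<pi>) real"
  shows "conv_distr (\<lambda>n. kernel_pow (imm_kernel p) n y) \<pi>"
proof (rule conv_distr_boundedI)
  fix f :: "nat \<Rightarrow> real" and B assume f: "\<And>x. \<bar>f x\<bar> \<le> B"
  let ?K = "imm_kernel p" and ?m = "(1 - p) / p" and ?E = "measure_pmf.expectation"
  have from_zero: "\<bar>?E (kernel_pow ?K n w) f - ?E (kernel_pow ?K n 0) f\<bar> \<le> 2 * B * ?m ^ n * real w"
    for n w using imm_coupling_bound[OF p f, of n 0 w] by simp
  have bnd: "integrable (measure_pmf \<pi>) (\<lambda>w. ?E (kernel_pow ?K n w) f)" for n
    by (rule integrable_pmf_bounded[where B=B]) (rule abs_expectation_le[OF f])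
  have to_pi: "\<bar>?E (kernel_pow ?K n 0) f - ?E \<pi> f\<bar> \<le> 2 * B * ?m ^ n * ?E \<pi> real" for n
  proof -
    have "?E (kernel_pow ?K n 0) f - ?E \<pi> f
        = ?E \<pi> (\<lambda>w. ?E (kernel_pow ?K n 0) f - ?E (kernel_pow ?K n w) f)"
      by (simp add: expectation_stationary_kernel_pow[where n=n, OF st f] Bochner_Integration.integral_diff
                    bnd measure_pmf.prob_space)
    also have "\<bar>\<dots>\<bar> \<le> ?E \<pi> (\<lambda>w. 2 * B * ?m ^ n * real w)"
      by (rule order.trans[OF integral_abs_bound integral_mono])
         (use bnd mean from_zero in \<open>auto simp: abs_minus_commute\<close>)
    finally show ?thesis by simp
  qed
  have "(\<lambda>n. ?E (kernel_pow ?K n y) f - ?E \<pi> f) \<longlonglongrightarrow> 0"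
  proof (rule Lim_null_comparison)
    show "\<forall>\<^sub>F n in sequentially. norm (?E (kernel_pow ?K n y) f - ?E \<pi> f)
                                  \<le> (2 * B * (real y + ?E \<pi> real)) * ?m ^ n"
    proof (intro always_eventually allI)
      fix n
      have "norm (?E (kernel_pow ?K n y) f - ?E \<pi> f)
          \<le> \<bar>?E (kernel_pow ?K n y) f - ?E (kernel_pow ?K n 0) f\<bar>
            + \<bar>?E (kernel_pow ?K n 0) f - ?E \<pi> f\<bar>"
        by simp
      also have "\<dots> \<le> 2 * B * ?m ^ n * real y + 2 * B * ?m ^ n * ?E \<pi> real"
        using from_zero[of n y] to_pi[of n] by linarith
      finally show "norm (?E (kernel_pow ?K n y) f - ?E \<pi> f)
                      \<le> (2 * B * (real y + ?E \<pi> real)) * ?m ^ n"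
        by (simp add: algebra_simps)
    qed
    show "(\<lambda>n. (2 * B * (real y + ?E \<pi> real)) * ?m ^ n) \<longlonglongrightarrow> 0"
      by (intro tendsto_mult_right_zero LIMSEQ_power_zero) (use m p in auto)
  qed
  then show "(\<lambda>n. ?E (kernel_pow ?K n y) f) \<longlonglongrightarrow> ?E \<pi> f" by (rule LIM_zero_cancel)
qed

section \<open>The stationary law is geometric\<close>

lemma negative_binomial_series:
  fixes q :: real
  assumes "0 \<le> q" "q < 1"
  shows "(\<lambda>w. real ((n + w) choose n) * q ^ w) sums (1 / (1 - q) ^ Suc n)"
proof -
  have "(\<lambda>w. ((-(real n + 1)) gchoose w) * (-q) ^ w) sums (1 + -q) powr (-(real n + 1))"
    by (rule gen_binomial_real) (use assms in auto)
  moreover have "((-(real n + 1)) gchoose w) * (-q) ^ w = real ((n + w) choose n) * q ^ w" for w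
  proof -
    have "((-(real n + 1)) gchoose w) = (-1) ^ w * ((real n + 1 + real w - 1) gchoose w)"
      by (rule gbinomial_minus)
    also have "real n + 1 + real w - 1 = real (n + w)" by simp
    also have "(real (n + w) gchoose w) = real ((n + w) choose w)" by (simp add: binomial_gbinomial)
    also have "(n + w) choose w = (n + w) choose n" using binomial_symmetric[of w "n + w"] by simp
    finally have "((-(real n + 1)) gchoose w) = (-1) ^ w * real ((n + w) choose n)" .
    moreover have "(-q) ^ w = (-1) ^ w * q ^ w" by (rule power_minus)
    moreover have "(-1::real) ^ w * (-1) ^ w = 1" by (induction w) auto
    ultimately show ?thesis by (metis (no_types, lifting) mult.assoc mult.left_commute mult_1)
  qed
  moreover have "(1 + -q) powr (-(real n + 1)) = 1 / (1 - q) ^ Suc n"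
  proof -
    have "(1 + -q) powr (-(real n + 1)) = (1 - q) powr (- real (Suc n))" by (simp add: add.commute)
    also have "\<dots> = inverse ((1 - q) powr (real (Suc n)))" by (rule powr_minus)
    also have "(1 - q) powr (real (Suc n)) = (1 - q) ^ Suc n"
      using assms by (intro powr_realpow) auto
    finally show ?thesis by (simp add: divide_inverse)
  qed
  ultimately show ?thesis by simp
qed

lemma imm_kernel_stationary_geometric:
  assumes p: "1/2 < p" "p < 1"
  shows "stationary (imm_kernel p) (geometric_pmf ((2 * p - 1) / p))"
  unfolding stationary_def
proof (rule pmf_eqI)
  fix n
  define r where "r = (2 * p - 1) / p"
  have r: "0 < r" "r \<le> 1" and hr: "1 - r = (1 - p) / p"
    using p by (auto simp: r_def field_simps)
  have p0: "0 < p" "p \<le> 1" using p by auto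
  have summand: "pmf (geometric_pmf r) w * pmf (imm_kernel p w) n
               = (r * p * (1 - p) ^ n) * (real ((n + w) choose n) * (1 - p) ^ w)" for w
  proof -
    have "((1 - p) / p) ^ w * p ^ Suc w = p * (((1 - p) / p) ^ w * p ^ w)"
      by (simp add: algebra_simps)
    also have "((1 - p) / p) ^ w * p ^ w = (1 - p) ^ w" using p0 by (simp add: power_divide)
    finally have pw: "((1 - p) / p) ^ w * p ^ Suc w = p * (1 - p) ^ w" .
    have "pmf (geometric_pmf r) w * pmf (imm_kernel p w) n
        = r * real ((n + w) choose n) * (1 - p) ^ n * (((1 - p) / p) ^ w * p ^ Suc w)"
      using r p0 by (simp add: pmf_imm_kernel hr mult_ac)
    then show ?thesis by (simp only: pw) (simp add: mult_ac)
  qed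
  have series: "(\<lambda>w. pmf (geometric_pmf r) w * pmf (imm_kernel p w) n)
                  sums ((r * p * (1 - p) ^ n) * (1 / (1 - (1 - p)) ^ Suc n))"
    unfolding summand by (rule sums_mult, rule negative_binomial_series) (use p in auto)
  have "pmf (bind_pmf (geometric_pmf r) (imm_kernel p)) n
      = measure_pmf.expectation (geometric_pmf r) (\<lambda>w. pmf (imm_kernel p w) n)"
    by (simp add: pmf_bind)
  also have "\<dots> = (r * p * (1 - p) ^ n) * (1 / (1 - (1 - p)) ^ Suc n)"
  proof -
    have "summable (\<lambda>w. norm (pmf (geometric_pmf r) w * pmf (imm_kernel p w) n))"
      using sums_summable[OF series] by simp
    from expectation_sums[OF this] series show ?thesis by (simp add: sums_iff)
  qed
  also have "\<dots> = r * ((1 - p) ^ n / p ^ n)" using p0 by (simp add: field_simps)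
  also have "\<dots> = pmf (geometric_pmf r) n" using r by (simp add: hr power_divide)
  finally show "pmf (bind_pmf (geometric_pmf r) (imm_kernel p)) n = pmf (geometric_pmf r) n" .
qed

section \<open>Positive recurrence\<close>

lemma avoid_bounds: "0 \<le> avoid K x n w \<and> avoid K x n w \<le> 1"
proof (induction n arbitrary: w)
  case 0
  then show ?case by simp
next
  case (Suc n)
  let ?g = "\<lambda>y. if y = x then 0 else avoid K x n y"
  have g: "0 \<le> ?g y \<and> ?g y \<le> 1" for y using Suc by auto
  have "integrable (measure_pmf (K w)) ?g"
    by (rule integrable_pmf_bounded[where B=1]) (use g in \<open>auto simp: abs_le_iff\<close>)
  then show ?case
    using g by (auto intro!: Bochner_Integration.integral_nonneg measure_pmf.integral_le_const)
qed

lemma stationary_avoid_telescope: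
  assumes st: "stationary K \<pi>"
  shows "pmf \<pi> x * avoid K x n x
       = measure_pmf.expectation \<pi> (avoid K x n) - measure_pmf.expectation \<pi> (avoid K x (Suc n))"
proof -
  let ?E = "measure_pmf.expectation"
  define g where "g = (\<lambda>y. if y = x then 0 else avoid K x n y)"
  have g: "\<bar>g y\<bar> \<le> 1" for y using avoid_bounds[of K x n y] by (auto simp: g_def)
  have a: "\<bar>avoid K x n x * indicator {x} y\<bar> \<le> 1" for y
    using avoid_bounds[of K x n x] by (auto simp: indicator_def)
  have "avoid K x (Suc n) = (\<lambda>w. ?E (K w) g)" by (simp add: g_def fun_eq_iff)
  then have "?E \<pi> (avoid K x (Suc n)) = ?E \<pi> (\<lambda>w. ?E (K w) g)" by simp
  also have "\<dots> = ?E \<pi> g"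
    using expectation_bind_pmf[OF g, of \<pi> K, symmetric] st by (simp add: stationary_def)
  finally have next_step: "?E \<pi> (avoid K x (Suc n)) = ?E \<pi> g" .
  have "?E \<pi> (avoid K x n) = ?E \<pi> (\<lambda>w. avoid K x n x * indicator {x} w + g w)"
    by (rule Bochner_Integration.integral_cong) (auto simp: g_def indicator_def)
  also have "\<dots> = ?E \<pi> (\<lambda>w. avoid K x n x * indicator {x} w) + ?E \<pi> g"
    by (rule Bochner_Integration.integral_add)
       (rule integrable_pmf_bounded[where B=1], rule a, rule integrable_pmf_bounded[where B=1], rule g)
  also have "?E \<pi> (\<lambda>w. avoid K x n x * indicator {x} w) = avoid K x n x * pmf \<pi> x"
    by (simp add: measure_pmf_single)
  finally show ?thesis using next_step by simp
qed

lemma positive_recurrent_of_stationary: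
  assumes st: "stationary K \<pi>" and pos: "\<And>x. 0 < pmf \<pi> x"
  shows "positive_recurrent K"
  unfolding positive_recurrent_def
proof
  fix x
  define c where "c n = measure_pmf.expectation \<pi> (avoid K x n)" for n
  have "avoid K x 0 = (\<lambda>_. 1)" by (rule ext) simp
  then have c0: "c 0 = 1" by (simp add: c_def measure_pmf.prob_space)
  have "0 \<le> c n" for n
    unfolding c_def by (rule Bochner_Integration.integral_nonneg) (use avoid_bounds[of K x n] in blast)
  have "summable (\<lambda>n. pmf \<pi> x * avoid K x n x)"
  proof (rule summableI_nonneg_bounded[where x=1])
    show "0 \<le> pmf \<pi> x * avoid K x n x" for n using avoid_bounds[of K x n x] by simp
    show "(\<Sum>i<n. pmf \<pi> x * avoid K x i x) \<le> 1" for n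
      using sum_lessThan_telescope'[of c n] c0 \<open>0 \<le> c n\<close>
      by (simp add: stationary_avoid_telescope[OF st] c_def[symmetric])
  qed
  then show "summable (\<lambda>n. avoid K x n x)"
    using summable_mult[of "\<lambda>n. pmf \<pi> x * avoid K x n x" "1 / pmf \<pi> x"] pos[of x] by simp
qed

lemma geometric_power_sums:
  assumes r: "0 < r" "r \<le> 1" and s: "\<bar>(1 - r) * s\<bar> < 1"
  shows "(\<lambda>k. pmf (geometric_pmf r) k * s ^ k) sums (r / (1 - (1 - r) * s))"
proof -
  have "(\<lambda>k. r * ((1 - r) * s) ^ k) sums (r * (1 / (1 - (1 - r) * s)))"
    by (rule sums_mult, rule geometric_sums) (use s in auto)
  moreover have "pmf (geometric_pmf r) k * s ^ k = r * ((1 - r) * s) ^ k" for k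
    using r by (simp add: power_mult_distrib)
  ultimately show ?thesis by simp
qed

lemma pgf_geometric:
  assumes "0 < r" "r \<le> 1" "\<bar>(1 - r) * s\<bar> < 1"
  shows "pgf (geometric_pmf r) s = r / (1 - (1 - r) * s)"
  unfolding pgf_def using geometric_power_sums[OF assms] by (simp add: sums_iff)

lemma expectation_geometric_power:
  assumes r: "0 < r" "r \<le> 1" and s: "\<bar>(1 - r) * s\<bar> < 1"
  shows "measure_pmf.expectation (geometric_pmf r) (\<lambda>d. s ^ d) = r / (1 - (1 - r) * s)"
proof -
  have "\<bar>(1 - r) * \<bar>s\<bar>\<bar> < 1" using s r by (simp add: abs_mult)
  from sums_summable[OF geometric_power_sums[OF r this]]
  have "summable (\<lambda>k. norm (pmf (geometric_pmf r) k * s ^ k))"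
    by (simp add: abs_mult power_abs)
  from expectation_sums[OF this] geometric_power_sums[OF r s] show ?thesis
    by (simp add: sums_iff)
qed

lemma offspring_pgf:
  fixes p q s :: real
  assumes "0 < q" "q < p" "p + q = 1" and s: "\<bar>s\<bar> \<le> 1"
  shows "measure_pmf.expectation (geometric_pmf p) (\<lambda>d. s ^ d) = p / (1 - q * s)"
proof -
  have p: "0 < p" "p \<le> 1" and hq: "q = 1 - p" using assms by auto
  have "q * \<bar>s\<bar> \<le> q" using s assms(1) by (simp add: mult_left_le)
  moreover have "\<bar>(1 - p) * s\<bar> = q * \<bar>s\<bar>" using p hq by (simp add: abs_mult)
  ultimately have "\<bar>(1 - p) * s\<bar> < 1" using p hq by linarith
  then show ?thesis using expectation_geometric_power[OF p] by (simp add: hq)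
qed

lemma geometric_pgf_functional_equation:
  fixes p q s :: real
  assumes pq: "0 < q" "q < p" "p + q = 1" and s: "\<bar>s\<bar> \<le> 1"
  shows "pgf (geometric_pmf ((2 * p - 1) / p)) s
       = pgf (geometric_pmf ((2 * p - 1) / p)) (p / (1 - q * s)) * (p / (1 - q * s))"
proof -
  define r where "r = (2 * p - 1) / p"
  define \<phi> where "\<phi> = p / (1 - q * s)"
  have r: "0 < r" "r \<le> 1" and hr: "1 - r = q / p" using pq by (auto simp: r_def field_simps)
  have qs: "q * \<bar>s\<bar> \<le> q" using s pq by (simp add: mult_left_le)
  moreover have "q * s \<le> q * \<bar>s\<bar>" using pq by (simp add: mult_left_mono)
  ultimately have den: "p \<le> 1 - q * s" "0 < p - q * s" using pq by linarith+
  have \<phi>: "0 < \<phi>" "\<phi> \<le> 1" using den pq by (auto simp: \<phi>_def)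
  have "q * \<bar>s\<bar> < p" using qs pq by linarith
  then have "\<bar>(1 - r) * s\<bar> < 1" using pq by (simp add: hr abs_mult field_simps)
  then have lhs: "pgf (geometric_pmf r) s = r * p / (p - q * s)"
    using den pq by (simp add: pgf_geometric[OF r] hr field_simps)
  have "(1 - r) * \<phi> \<le> 1 - r" using \<phi> r by (simp add: mult_left_le)
  then have "\<bar>(1 - r) * \<phi>\<bar> < 1" using \<phi> r by (simp add: abs_of_nonneg)
  moreover have "1 - (1 - r) * \<phi> = (p - q * s) / (1 - q * s)"
    using den pq by (simp add: hr \<phi>_def field_simps)
  ultimately have rhs: "pgf (geometric_pmf r) \<phi> * \<phi> = r * p / (p - q * s)"
    using den pq by (simp add: pgf_geometric[OF r] \<phi>_def)
  show ?thesis using lhs rhs by (simp add: r_def \<phi>_def)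
qed

lemma chain_path_cong:
  "(\<And>j. j < n \<Longrightarrow> K j = K' j) \<Longrightarrow> chain_path i K n = chain_path i K' n"
  by (induction n) auto

lemma chain_path_bind_init:
  "chain_path (bind_pmf \<mu> f) K n = bind_pmf \<mu> (\<lambda>x. chain_path (f x) K n)"
  by (induction n) (simp_all add: map_bind_pmf bind_assoc_pmf)

lemma chain_path_mixture:
  "chain_path \<mu> K n = bind_pmf \<mu> (\<lambda>x. chain_path (return_pmf x) K n)"
  using chain_path_bind_init[of \<mu> return_pmf K n] by (simp add: bind_return_pmf')

lemma length_chain_path:
  "xs \<in> set_pmf (chain_path i K n) \<Longrightarrow> length xs = Suc n"
  by (induction n arbitrary: xs) auto

lemma chain_path_last:
  "map_pmf last (chain_path i (\<lambda>_. K) n) = bind_pmf i (kernel_pow K n)"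
proof (induction n)
  case 0
  then show ?case by (simp add: map_pmf_comp kernel_pow_fun bind_return_pmf' map_pmf_ident)
next
  case (Suc n)
  have "map_pmf last (chain_path i (\<lambda>_. K) (Suc n))
      = bind_pmf (map_pmf last (chain_path i (\<lambda>_. K) n)) K"
    by (simp add: map_bind_pmf map_pmf_comp bind_map_pmf)
  also have "\<dots> = bind_pmf i (\<lambda>x. bind_pmf (kernel_pow K n x) K)"
    using Suc by (simp add: bind_assoc_pmf)
  also have "(\<lambda>x. bind_pmf (kernel_pow K n x) K) = kernel_pow K (Suc n)"
    by (rule ext, rule kernel_pow_Suc_right[symmetric])
  finally show ?case .
qed

lemma chain_path_drop:
  "map_pmf (drop a) (chain_path i K (a + M))
     = chain_path (map_pmf last (chain_path i K a)) (\<lambda>j. K (a + j)) M"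
proof (induction M)
  case 0
  have "map_pmf (drop a) (chain_path i K a) = map_pmf (\<lambda>xs. [last xs]) (chain_path i K a)"
  proof (rule map_pmf_cong[OF refl])
    fix xs assume "xs \<in> set_pmf (chain_path i K a)"
    then have "length xs = Suc a" by (rule length_chain_path)
    then show "drop a xs = [last xs]" by (cases xs rule: rev_cases) auto
  qed
  then show ?case by (simp add: map_pmf_comp)
next
  case (Suc M)
  have "map_pmf (drop a) (chain_path i K (a + Suc M))
      = bind_pmf (map_pmf (drop a) (chain_path i K (a + M)))
                 (\<lambda>ys. map_pmf (\<lambda>y. ys @ [y]) (K (a + M) (last ys)))"
    unfolding add_Suc_right chain_path.simps map_bind_pmf map_pmf_comp bind_map_pmf
  proof (rule bind_pmf_cong[OF refl])
    fix xs assume "xs \<in> set_pmf (chain_path i K (a + M))"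
    then have "length xs = Suc (a + M)" by (rule length_chain_path)
    then show "map_pmf (\<lambda>y. drop a (xs @ [y])) (K (a + M) (last xs))
             = map_pmf (\<lambda>y. drop a xs @ [y]) (K (a + M) (last (drop a xs)))"
      by (simp add: last_drop)
  qed
  then show ?case using Suc by simp
qed

lemma conv_distr_chain_path:
  assumes "conv_distr X \<pi>"
  shows "conv_distr (\<lambda>N. chain_path (X N) K M) (chain_path \<pi> K M)"
  using conv_distr_bind[OF assms, of "\<lambda>x. chain_path (return_pmf x) K M"]
  by (simp only: chain_path_mixture[symmetric])

section \<open>Windows of a chain that switches kernels at time t\<close>

lemma switched_chain_at_switch:
  "map_pmf (\<lambda>xs. xs ! t) (chain_path (return_pmf x0) (\<lambda>j. if j < t then K else G) t)
     = kernel_pow K t x0"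
proof -
  have "map_pmf (\<lambda>xs. xs ! t) (chain_path (return_pmf x0) (\<lambda>j. if j < t then K else G) t)
      = map_pmf last (chain_path (return_pmf x0) (\<lambda>_. K) t)"
    unfolding chain_path_cong[of t "\<lambda>j. if j < t then K else G" "\<lambda>_. K", simplified]
  proof (rule map_pmf_cong[OF refl])
    fix xs assume "xs \<in> set_pmf (chain_path (return_pmf x0) (\<lambda>_. K) t)"
    then have "length xs = Suc t" by (rule length_chain_path)
    then show "xs ! t = last xs" by (cases xs rule: rev_cases) (auto simp: nth_append)
  qed
  then show ?thesis by (simp add: chain_path_last bind_return_pmf)
qed

lemma backward_window:
  "map_pmf (\<lambda>xs. map (\<lambda>k. xs ! (a + M - k)) [0..<M+1]) (chain_path i (\<lambda>_. K) (a + M))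
     = map_pmf rev (chain_path (bind_pmf i (kernel_pow K a)) (\<lambda>_. K) M)"
proof -
  have "map_pmf (\<lambda>xs. map (\<lambda>k. xs ! (a + M - k)) [0..<M+1]) (chain_path i (\<lambda>_. K) (a + M))
      = map_pmf (\<lambda>xs. rev (drop a xs)) (chain_path i (\<lambda>_. K) (a + M))"
  proof (rule map_pmf_cong[OF refl])
    fix xs assume "xs \<in> set_pmf (chain_path i (\<lambda>_. K) (a + M))"
    then have "length xs = Suc (a + M)" by (rule length_chain_path)
    then show "map (\<lambda>k. xs ! (a + M - k)) [0..<M+1] = rev (drop a xs)"
      by (intro nth_equalityI) (simp_all add: rev_nth nth_drop nth_map_upt del: upt.simps)
  qed
  then show ?thesis
    by (simp add: map_pmf_comp[symmetric] chain_path_drop chain_path_last)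
qed

lemma forward_window:
  "map_pmf (\<lambda>xs. map (\<lambda>k. xs ! (t + k)) [0..<M+1])
       (chain_path i (\<lambda>j. if j < t then K else G) (t + M))
     = chain_path (bind_pmf i (kernel_pow K t)) (\<lambda>_. G) M"
proof -
  let ?KG = "\<lambda>j. if j < t then K else G"
  have "map_pmf (\<lambda>xs. map (\<lambda>k. xs ! (t + k)) [0..<M+1]) (chain_path i ?KG (t + M))
      = map_pmf (drop t) (chain_path i ?KG (t + M))"
  proof (rule map_pmf_cong[OF refl])
    fix xs assume "xs \<in> set_pmf (chain_path i ?KG (t + M))"
    then have "length xs = Suc (t + M)" by (rule length_chain_path)
    then show "map (\<lambda>k. xs ! (t + k)) [0..<M+1] = drop t xs"
      by (intro nth_equalityI) (simp_all add: nth_drop nth_map_upt del: upt.simps)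
  qed
  also have "\<dots> = chain_path (map_pmf last (chain_path i ?KG t)) (\<lambda>_. G) M"
    by (simp add: chain_path_drop)
  also have "chain_path i ?KG t = chain_path i (\<lambda>_. K) t"
    by (rule chain_path_cong) simp
  finally show ?thesis by (simp add: chain_path_last)
qed

context
  fixes K G :: "'a \<Rightarrow> 'a pmf" and x0 :: 'a and \<pi> :: "'a pmf" and t :: "nat \<Rightarrow> nat"
  assumes conv: "conv_distr (\<lambda>n. kernel_pow K n x0) \<pi>"
    and t: "filterlim t sequentially sequentially"
begin

lemma switched_chain_at_switch_conv:
  "conv_distr (\<lambda>N. map_pmf (\<lambda>xs. xs ! t N)
     (chain_path (return_pmf x0) (\<lambda>j. if j < t N then K else G) (t N))) \<pi>"
  unfolding switched_chain_at_switch by (rule conv_distr_reindex[OF conv t])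

lemma switched_chain_backward_conv:
  "conv_distr (\<lambda>N. map_pmf (\<lambda>xs. map (\<lambda>k. xs ! (t N - k)) [0..<M+1])
     (chain_path (return_pmf x0) (\<lambda>j. if j < t N then K else G) (t N)))
   (map_pmf rev (chain_path \<pi> (\<lambda>_. K) M))"
proof (rule conv_distr_eventually_eq)
  have "filterlim (\<lambda>N. t N - M) sequentially sequentially"
    by (rule filterlim_compose[OF filterlim_minus_const_nat_at_top t])
  then show "conv_distr (\<lambda>N. map_pmf rev (chain_path (kernel_pow K (t N - M) x0) (\<lambda>_. K) M))
                        (map_pmf rev (chain_path \<pi> (\<lambda>_. K) M))"
    by (intro conv_distr_map conv_distr_chain_path conv_distr_reindex[OF conv])
  have "eventually (\<lambda>N. M \<le> t N) sequentially"
    using t unfolding filterlim_at_top by blast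
  then show "eventually (\<lambda>N. map_pmf rev (chain_path (kernel_pow K (t N - M) x0) (\<lambda>_. K) M)
      = map_pmf (\<lambda>xs. map (\<lambda>k. xs ! (t N - k)) [0..<M+1])
          (chain_path (return_pmf x0) (\<lambda>j. if j < t N then K else G) (t N))) sequentially"
  proof eventually_elim
    case (elim N)
    then have tN: "t N = (t N - M) + M" by simp
    have "chain_path (return_pmf x0) (\<lambda>j. if j < t N then K else G) (t N)
        = chain_path (return_pmf x0) (\<lambda>_. K) ((t N - M) + M)"
      by (subst tN, rule chain_path_cong) (use elim in auto)
    then show ?case
      using backward_window[of "t N - M" M "return_pmf x0" K] tN by (simp add: bind_return_pmf)
  qed
qed

lemma switched_chain_forward_conv:
  "conv_distr (\<lambda>N. map_pmf (\<lambda>xs. map (\<lambda>k. xs ! (t N + k)) [0..<M+1])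
     (chain_path (return_pmf x0) (\<lambda>j. if j < t N then K else G) (t N + M)))
   (chain_path \<pi> (\<lambda>_. G) M)"
  unfolding forward_window bind_return_pmf
  by (intro conv_distr_chain_path conv_distr_reindex[OF conv t])

end

lemma filterlim_nat_floor_mult:
  fixes c :: real
  assumes "0 < c"
  shows "filterlim (\<lambda>N. nat \<lfloor>c * real N\<rfloor>) sequentially sequentially"
  unfolding filterlim_at_top eventually_sequentially
proof (intro allI exI impI)
  fix Z N :: nat assume "nat \<lceil>real Z / c\<rceil> \<le> N"
  then have "real Z \<le> c * real N" using assms by (simp add: field_simps)
  then show "Z \<le> nat \<lfloor>c * real N\<rfloor>" by linarith
qed

theorem proposition3p5:
  fixes p q \<alpha> :: real
  assumes "0 < q" "q < p" "p + q = 1" "0 < \<alpha>" "\<alpha> < 1"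
  shows "positive_recurrent (imm_kernel p)
    \<and> (\<exists>!\<pi>. stationary (imm_kernel p) \<pi>)
    \<and> (\<forall>\<pi>. stationary (imm_kernel p) \<pi> \<longrightarrow>
         (\<forall>s. \<bar>s\<bar> \<le> 1 \<longrightarrow>
            measure_pmf.expectation (geometric_pmf p) (\<lambda>d. s ^ d) = p / (1 - q * s)
          \<and> pgf \<pi> s = pgf \<pi> (p / (1 - q * s)) * (p / (1 - q * s)))
       \<and> conv_distr (\<lambda>N. map_pmf (\<lambda>xs. xs ! nat \<lfloor>(1 - \<alpha>) * real N\<rfloor>)
                          (eta_path p \<alpha> N (nat \<lfloor>(1 - \<alpha>) * real N\<rfloor>))) \<pi>
       \<and> (\<forall>M::nat. M \<ge> 1 \<longrightarrow>
            conv_distr (\<lambda>N. map_pmf (\<lambda>xs. map (\<lambda>k. xs ! (nat \<lfloor>(1 - \<alpha>) * real N\<rfloor> - k)) [0..<M+1])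
                               (eta_path p \<alpha> N (nat \<lfloor>(1 - \<alpha>) * real N\<rfloor>)))
                       (map_pmf rev (chain_path \<pi> (\<lambda>_. imm_kernel p) M))
          \<and> conv_distr (\<lambda>N. map_pmf (\<lambda>xs. map (\<lambda>k. xs ! (nat \<lfloor>(1 - \<alpha>) * real N\<rfloor> + k)) [0..<M+1])
                               (eta_path p \<alpha> N (nat \<lfloor>(1 - \<alpha>) * real N\<rfloor> + M)))
                       (chain_path \<pi> (\<lambda>_. gw_kernel p) M)))"
proof -
  have p: "1/2 < p" "p < 1" using assms by auto
  define r where "r = (2 * p - 1) / p"
  define \<pi>0 where "\<pi>0 = geometric_pmf r"
  have r: "0 < r" "r < 1" and mean: "(1 - p) / p < 1" using p by (auto simp: r_def field_simps)
  have st: "stationary (imm_kernel p) \<pi>0"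
    unfolding \<pi>0_def r_def by (rule imm_kernel_stationary_geometric[OF p])
  have conv: "conv_distr (\<lambda>n. kernel_pow (imm_kernel p) n w) \<pi>0" for w
    by (rule imm_kernel_convergence[OF _ _ mean st])
       (use p r in \<open>auto simp: \<pi>0_def intro: integrable_real_geometric_pmf\<close>)
  have stationary_iff: "stationary (imm_kernel p) \<pi> \<longleftrightarrow> \<pi> = \<pi>0" for \<pi>
    using stationary_unique_of_convergence[OF conv] st by blast
  have t: "filterlim (\<lambda>N. nat \<lfloor>(1 - \<alpha>) * real N\<rfloor>) sequentially sequentially"
    by (rule filterlim_nat_floor_mult) (use assms in simp)
  have "positive_recurrent (imm_kernel p)"
    by (rule positive_recurrent_of_stationary[OF st]) (use r in \<open>simp add: \<pi>0_def\<close>)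
  then show ?thesis
    unfolding stationary_iff eta_path_def
    using offspring_pgf[OF assms(1-3)] geometric_pgf_functional_equation[OF assms(1-3), folded r_def \<pi>0_def]
      switched_chain_at_switch_conv[OF conv t] switched_chain_backward_conv[OF conv t]
      switched_chain_forward_conv[OF conv t]
    by auto
qed

end
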